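(* Let $\beta>0$, let $\mathcal{A}$ be a finite vocabulary, let $\pi_{\mathrm{ref}}$ be a reference policy, and consider the token-level MDP with deterministic transitions and reward function $r(\mathbf{s},\mathbf{a})$ described in the context, with optimal KL-regularized policy $\pi^*$ and optimal soft state-value function $V^*$. Let $x$ be a prompt and let $y_w=(\mathbf{a}^w_0,\mathbf{a}^w_1,\dots)$ and $y_l=(\mathbf{a}^l_0,\mathbf{a}^l_1,\dots)$ be two responses to $x$, with states $\mathbf{s}^v_0=x$ and $\mathbf{s}^v_{t+1}=\mathbf{s}^v_t\oplus \mathbf{a}^v_t$ for $v\in\{w,l\}$. For an integer $k\ge 0$ not exceeding the lengths of both responses, define the equal-length sub-trajectory Bradley–Terry model $$p^*_k(y_{w,\le k}\succeq y_{l,\le k})=\frac{E_w}{E_w+E_l},\qquad E_v=\exp\Big(\sum_{t=0}^{k} r(\mathbf{s}^v_t,\mathbf{a}^v_t)+V^*(\mathbf{s}^v_{k+1})\Big).$$ Then the policy derived from the optimal equal-length sub-trajectory BT model is equivalent to the optimal policy derived from the original sequence-level BT model for DPO; that is, for every such $k$, $$p^*_k(y_{w,\le k}\succeq y_{l,\le k})=\sigma\big(R_w(k)-R_l(k)\big),\qquad R_v(k)=\sum_{t=0}^{k}\beta\log\frac{\pi^*(\mathbf{a}^v_t\mid \mathbf{s}^v_t)}{\pi_{\mathrm{ref}}(\mathbf{a}^v_t\mid \mathbf{s}^v_t)},$$ so the equal-length model is parameterized by the same optimal policy $\pi^*$ in the same DPO form as the sequence-level model.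
   Context: Token-level MDP: a state $\mathbf{s}_t=(x_0,\dots,x_m,y_0,\dots,y_{t-1})$ consists of the prompt tokens together with all response tokens generated so far; an action $\mathbf{a}_t\in\mathcal{A}$ selects the next token, and the transition is deterministic: $\mathbf{s}_{t+1}=\mathbf{s}_t\oplus\mathbf{a}_t$ (concatenation). A response ends at a terminal (end-of-sequence) state, at which $V^*=0$. The RL objective is the KL-regularized one: maximize $\mathbb{E}\big[\sum_t r(\mathbf{s}_t,\mathbf{a}_t)\big]-\beta\,\mathbb{D}_{\mathrm{KL}}[\pi(\cdot\mid x)\,\|\,\pi_{\mathrm{ref}}(\cdot\mid x)]$ over policies $\pi$. Its optimal soft value functions satisfy $Q^*(\mathbf{s}_t,\mathbf{a}_t)=r(\mathbf{s}_t,\mathbf{a}_t)+V^*(\mathbf{s}_{t+1})$, $V^*(\mathbf{s})=\beta\log\sum_{\mathbf{a}\in\mathcal{A}}\pi_{\mathrm{ref}}(\mathbf{a}\mid\mathbf{s})\exp(Q^*(\mathbf{s},\mathbf{a})/\beta)$, and the optimal policy is $\pi^*(\mathbf{a}\mid\mathbf{s})=\pi_{\mathrm{ref}}(\mathbf{a}\mid\mathbf{s})\exp\big((Q^*(\mathbf{s},\mathbf{a})-V^*(\mathbf{s}))/\beta\big)$. The original sequence-level Bradley–Terry model is $p^*(y_w\succeq y_l)=A_w/(A_w+A_l)$ with $A_w=\exp(\sum_{i} r(\mathbf{s}^w_i,\mathbf{a}^w_i))$, $A_l=\exp(\sum_{i} r(\mathbf{s}^l_i,\mathbf{a}^l_i))$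 summed over the full responses; DPO expresses this model through the optimal policy as $\sigma$ of the difference of the full-sequence sums $\sum_i\beta\log\frac{\pi^*(\mathbf{a}_i\mid\mathbf{s}_i)}{\pi_{\mathrm{ref}}(\mathbf{a}_i\mid\mathbf{s}_i)}$ for $y_w$ and $y_l$, and fits the policy by maximum likelihood of preference data under this parameterization. $\sigma(z)=1/(1+e^{-z})$ is the sigmoid function; $y_{v,\le k}$ denotes the prefix $(\mathbf{a}^v_0,\dots,\mathbf{a}^v_k)$. *)

theory Defs
  imports Complex_Main
begin

text \<open>Tokens have a finite type 'a (the vocabulary); a state is the
list of prompt tokens followed by the response tokens generated so far; the transition
is deterministic concatenation s \<oplus> a = s @ [a].\<close>

definition sigmoid :: "real \<Rightarrow> real" where
  "sigmoid z = 1 / (1 + exp (- z))"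

definition resp_state :: "'a list \<Rightarrow> 'a list \<Rightarrow> nat \<Rightarrow> 'a list" where
  "resp_state x y t = x @ take t y"

definition optimal_soft_values ::
  "real \<Rightarrow> ('a::finite list \<Rightarrow> bool) \<Rightarrow> ('a list \<Rightarrow> 'a \<Rightarrow> real) \<Rightarrow> ('a list \<Rightarrow> 'a \<Rightarrow> real)
     \<Rightarrow> ('a list \<Rightarrow> 'a \<Rightarrow> real) \<Rightarrow> ('a list \<Rightarrow> real) \<Rightarrow> bool" where
  "optimal_soft_values \<beta> terminal r pi_ref Q V \<longleftrightarrow>
     (\<forall>s a. Q s a = r s a + V (s @ [a])) \<and>
     (\<forall>s. terminal s \<longrightarrow> V s = 0) \<and>
     (\<forall>s. \<not> terminal s \<longrightarrow> V s = \<beta> * ln (\<Sum>a\<in>UNIV. pi_ref s a * exp (Q s a / \<beta>)))"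

definition opt_policy ::
  "real \<Rightarrow> ('a list \<Rightarrow> 'a \<Rightarrow> real) \<Rightarrow> ('a list \<Rightarrow> 'a \<Rightarrow> real) \<Rightarrow> ('a list \<Rightarrow> real)
     \<Rightarrow> 'a list \<Rightarrow> 'a \<Rightarrow> real" where
  "opt_policy \<beta> pi_ref Q V s a = pi_ref s a * exp ((Q s a - V s) / \<beta>)"

definition E_sub :: "('a list \<Rightarrow> 'a \<Rightarrow> real) \<Rightarrow> ('a list \<Rightarrow> real) \<Rightarrow> 'a list \<Rightarrow> 'a list \<Rightarrow> nat \<Rightarrow> real" where
  "E_sub r V x y k = exp ((\<Sum>t=0..k. r (resp_state x y t) (y ! t)) + V (resp_state x y (Suc k)))"

definition BT_sub :: "('a list \<Rightarrow> 'a \<Rightarrow> real) \<Rightarrow> ('a list \<Rightarrow> real) \<Rightarrow> 'a list \<Rightarrow> 'a list \<Rightarrow> 'a list \<Rightarrow> nat \<Rightarrow> real" where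
  "BT_sub r V x yw yl k = E_sub r V x yw k / (E_sub r V x yw k + E_sub r V x yl k)"

definition dpo_reward :: "real \<Rightarrow> ('a list \<Rightarrow> 'a \<Rightarrow> real) \<Rightarrow> ('a list \<Rightarrow> 'a \<Rightarrow> real) \<Rightarrow> 'a list \<Rightarrow> 'a list \<Rightarrow> nat \<Rightarrow> real" where
  "dpo_reward \<beta> pol pi_ref x y k =
     (\<Sum>t=0..k. \<beta> * ln (pol (resp_state x y t) (y ! t) / pi_ref (resp_state x y t) (y ! t)))"

end

theory Submission
  imports Defs
begin

text \<open>By definition of the optimal policy, \<open>\<beta> log (\<pi>*/\<pi>_ref) = Q* - V*\<close>, and the Bellman
equation \<open>Q*(s,a) = r(s,a) + V*(s \<oplus> a)\<close> makes the implicit reward of a prefix telescope to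
\<open>\<Sum>\<^sub>t r(s\<^sub>t,a\<^sub>t) + V*(s\<^sub>k\<^sub>+\<^sub>1) - V*(x)\<close>. Both responses start at the prompt, so \<open>V*(x)\<close> cancels
in the difference, and \<open>e\<^sup>A/(e\<^sup>A + e\<^sup>B) = \<sigma>(A - B)\<close> finishes the proof.\<close>

lemma resp_state_Suc:
  "t < length y \<Longrightarrow> resp_state x y (Suc t) = resp_state x y t @ [y ! t]"
  unfolding resp_state_def by (simp add: take_Suc_conv_app_nth)

lemma resp_state_0 [simp]: "resp_state x y 0 = x"
  unfolding resp_state_def by simp

lemma log_ratio_opt_policy:
  assumes "\<beta> \<noteq> 0" "pi_ref s a > 0"
  shows "\<beta> * ln (opt_policy \<beta> pi_ref Q V s a / pi_ref s a) = Q s a - V s"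
  using assms unfolding opt_policy_def by simp

lemma dpo_reward_opt_policy_telescope:
  assumes "\<beta> \<noteq> 0" "\<forall>s a. pi_ref s a > 0"
    and bellman: "\<forall>s a. Q s a = r s a + V (s @ [a])"
    and "k < length y"
  shows "dpo_reward \<beta> (opt_policy \<beta> pi_ref Q V) pi_ref x y k
       = (\<Sum>t=0..k. r (resp_state x y t) (y ! t)) + V (resp_state x y (Suc k)) - V x"
proof -
  have step: "\<beta> * ln (opt_policy \<beta> pi_ref Q V (resp_state x y t) (y ! t)
                      / pi_ref (resp_state x y t) (y ! t))
      = r (resp_state x y t) (y ! t) + (V (resp_state x y (Suc t)) - V (resp_state x y t))"
    if "t \<in> {0..k}" for t
  proof -
    have "t < length y" using that assms(4) by simp
    then show ?thesis
      using log_ratio_opt_policy[OF assms(1), of pi_ref] assms(2)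
      by (simp add: bellman resp_state_Suc)
  qed
  have "dpo_reward \<beta> (opt_policy \<beta> pi_ref Q V) pi_ref x y k
      = (\<Sum>t=0..k. r (resp_state x y t) (y ! t))
        + (\<Sum>t=0..k. V (resp_state x y (Suc t)) - V (resp_state x y t))"
    unfolding dpo_reward_def by (simp add: step sum.distrib)
  also have "(\<Sum>t=0..k. V (resp_state x y (Suc t)) - V (resp_state x y t))
      = V (resp_state x y (Suc k)) - V x"
    by (subst sum_Suc_diff) simp_all
  finally show ?thesis by simp
qed

lemma exp_div_exp_add_exp: "exp A / (exp A + exp B) = sigmoid (A - B)"
proof -
  have "exp A / (exp A + exp B) = 1 / (1 + exp B / exp A)"
    by (simp add: field_simps add_pos_pos)
  then show ?thesis
    unfolding sigmoid_def by (simp add: exp_diff)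
qed

theorem theorem1:
  fixes \<beta> :: real
    and terminal :: "'a::finite list \<Rightarrow> bool"
    and r :: "'a list \<Rightarrow> 'a \<Rightarrow> real"
    and pi_ref :: "'a list \<Rightarrow> 'a \<Rightarrow> real"
    and Q :: "'a list \<Rightarrow> 'a \<Rightarrow> real"
    and V :: "'a list \<Rightarrow> real"
    and x yw yl :: "'a list"
    and k :: nat
  assumes beta_pos: "\<beta> > 0"
    and ref_pos: "\<forall>s a. pi_ref s a > 0"
    and ref_sum: "\<forall>s. (\<Sum>a\<in>UNIV. pi_ref s a) = 1"
    and opt: "optimal_soft_values \<beta> terminal r pi_ref Q V"
    and kw: "k < length yw"
    and kl: "k < length yl"
  shows "BT_sub r V x yw yl k =
           sigmoid (dpo_reward \<beta> (opt_policy \<beta> pi_ref Q V) pi_ref x yw k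
                    - dpo_reward \<beta> (opt_policy \<beta> pi_ref Q V) pi_ref x yl k)"
proof -
  have beta_nz: "\<beta> \<noteq> 0" using beta_pos by simp
  have bellman: "\<forall>s a. Q s a = r s a + V (s @ [a])"
    using opt unfolding optimal_soft_values_def by blast
  note telescope = dpo_reward_opt_policy_telescope[OF beta_nz ref_pos bellman]
  show ?thesis
    unfolding BT_sub_def E_sub_def exp_div_exp_add_exp telescope[OF kw] telescope[OF kl]
    by (simp add: algebra_simps)
qed

end
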